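(* Let $\{(\mathbf{x}_i,y_i)\}_{i=1}^n\subset\mathbb{R}^d\times\mathbb{R}$ with $\|\mathbf{x}_i\|=1$ and $|y_i|=O(1)$, and suppose $\lambda_0:=\lambda_{\min}(\mathbf{H}^\infty)>0$, where $\mathbf{H}^\infty_{ij}=\mathbf{x}_i^\top\mathbf{x}_j\frac{\pi-\arccos(\mathbf{x}_i^\top\mathbf{x}_j)}{2\pi}$. Let $\mathbf{W}=(\mathbf{w}_1,\dots,\mathbf{w}_m)$ with $\mathbf{w}_r\in\mathbb{R}^d$, $a_r\in\{-1,+1\}$, $u_i=\frac{1}{\sqrt m}\sum_{r=1}^m a_r\sigma(\mathbf{w}_r^\top\mathbf{x}_i)$ with $\sigma(z)=\max(z,0)$, $\mathbf{u}=(u_1,\dots,u_n)^\top$, $\mathbf{y}=(y_1,\dots,y_n)^\top$, $L(\mathbf{W})=\frac12\|\mathbf{u}-\mathbf{y}\|^2$, and let $\mathbf{H}\in\mathbb{R}^{n\times n}$ be given by $\mathbf{H}_{ij}=\frac1m\sum_{r=1}^m\mathbf{x}_i^\top\mathbf{x}_j\mathbb{I}\{\mathbf{w}_r^\top\mathbf{x}_i\ge0,\mathbf{w}_r^\top\mathbf{x}_j\ge0\}$. If $\lambda_{\min}(\mathbf{H})\ge\lambda_0/2$, then $$\frac{\sqrt{\lambda_0}}{\sqrt{2m}}\|\mathbf{y}-\mathbf{u}\|\le\max_{r\in[m]}\left\|\frac{\partial L(\mathbf{W})}{\partial\mathbf{w}_r}\right\|\le\frac{\sqrt n}{\sqrt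 m}\|\mathbf{y}-\mathbf{u}\|.$$
   Context: The gradient uses the convention $\frac{\partial L(\mathbf{W})}{\partial\mathbf{w}_r}=\frac{1}{\sqrt m}\sum_{i=1}^n(u_i-y_i)a_r\mathbf{x}_i\mathbb{I}\{\mathbf{w}_r^\top\mathbf{x}_i\ge0\}$. $\|\cdot\|$ is the Euclidean norm and $\lambda_{\min}$ the smallest eigenvalue. *)

theory Defs
  imports "HOL-Analysis.Analysis"
begin

definition lambda_min :: "real^'n^'n \<Rightarrow> real" where
  "lambda_min A = Min {c. \<exists>v. v \<noteq> 0 \<and> A *v v = c *s v}"

definition relu :: "real \<Rightarrow> real" where
  "relu z = max z 0"

definition net_out :: "('n \<Rightarrow> real^'d) \<Rightarrow> ('m::finite \<Rightarrow> real^'d) \<Rightarrow> ('m \<Rightarrow> real) \<Rightarrow> real^'n" where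
  "net_out x W a = (\<chi> i. (1 / sqrt (real CARD('m))) * (\<Sum>r\<in>UNIV. a r * relu (W r \<bullet> x i)))"

definition loss :: "('n::finite \<Rightarrow> real^'d) \<Rightarrow> real^'n \<Rightarrow> ('m::finite \<Rightarrow> real^'d) \<Rightarrow> ('m \<Rightarrow> real) \<Rightarrow> real" where
  "loss x y W a = (1/2) * (norm (net_out x W a - y))\<^sup>2"

definition loss_grad :: "('n::finite \<Rightarrow> real^'d) \<Rightarrow> real^'n \<Rightarrow> ('m::finite \<Rightarrow> real^'d) \<Rightarrow> ('m \<Rightarrow> real) \<Rightarrow> 'm \<Rightarrow> real^'d" where
  "loss_grad x y W a r = (1 / sqrt (real CARD('m))) *\<^sub>R
     (\<Sum>i\<in>UNIV. ((net_out x W a $ i - y $ i) * a r * (if W r \<bullet> x i \<ge> 0 then 1 else 0)) *\<^sub>R x i)"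

definition H_inf :: "('n::finite \<Rightarrow> real^'d) \<Rightarrow> real^'n^'n" where
  "H_inf x = (\<chi> i j. (x i \<bullet> x j) * (pi - arccos (x i \<bullet> x j)) / (2 * pi))"

definition H_mat :: "('n::finite \<Rightarrow> real^'d) \<Rightarrow> ('m::finite \<Rightarrow> real^'d) \<Rightarrow> real^'n^'n" where
  "H_mat x W = (\<chi> i j. (1 / real CARD('m)) * (\<Sum>r\<in>UNIV. (x i \<bullet> x j) *
       (if W r \<bullet> x i \<ge> 0 \<and> W r \<bullet> x j \<ge> 0 then 1 else 0)))"

end

theory Submission
  imports Defs
begin

(* Writing e = u - y, the matrix H is the Gram matrix of the activation-gated
   combinations of the inputs, and because a_r^2 = 1 this gives
   e^T H e = sum_r ||dL/dw_r||^2 <= m * max_r ||dL/dw_r||^2.  Together with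
   lambda_min(H) ||e||^2 <= e^T H e this yields the lower bound.  The upper bound
   is the triangle inequality for each gradient combined with ||e||_1 <= sqrt n ||e||.
   Since lambda_min is the least real eigenvalue, the Rayleigh bound needs an
   argument: the minimum c of the quadratic form on the unit sphere makes A - c I
   positive semidefinite and vanishing on the minimiser, which is therefore an
   eigenvector; symmetry also makes the set of eigenvalues finite, so its Min exists. *)

lemma symmetric_matrix_inner_commute:
  fixes A :: "real^'n^'n"
  assumes "transpose A = A"
  shows "v \<bullet> (A *v w) = w \<bullet> (A *v v)"
proof -
  have "v \<bullet> (A *v w) = (transpose A *v v) \<bullet> w"
    by (simp add: dot_lmul_matrix transpose_matrix_vector)
  then show ?thesis
    using assms by (simp add: inner_commute)
qed

lemma linear_plus_quadratic_nonneg_imp_eq_0: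
  fixes a b :: real
  assumes "\<And>t. 0 \<le> t * a + t\<^sup>2 * b"
  shows "a = 0"
proof (rule ccontr)
  assume "a \<noteq> 0"
  define s where "s = \<bar>b\<bar> + 1"
  have s: "s > 0" "b \<le> s - 1" by (auto simp: s_def)
  have "(- a / s)\<^sup>2 * b \<le> (a / s)\<^sup>2 * (s - 1)"
    using s by (simp add: mult_left_mono)
  then have "0 \<le> - a\<^sup>2 / s + (a / s)\<^sup>2 * (s - 1)"
    using assms[of "- a / s"] by (simp add: power2_eq_square)
  also have "\<dots> = - (a / s)\<^sup>2"
    using s by (simp add: power2_eq_square field_simps)
  also have "\<dots> < 0"
    using \<open>a \<noteq> 0\<close> s by simp
  finally show False by simp
qed

lemma nonneg_selfadjoint_zero_form_imp_zero:
  fixes f :: "'a::real_inner \<Rightarrow> 'a"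
  assumes lin: "linear f"
    and selfadjoint: "\<And>v w. v \<bullet> f w = w \<bullet> f v"
    and nonneg: "\<And>z. 0 \<le> z \<bullet> f z"
    and zero: "v \<bullet> f v = 0"
  shows "f v = 0"
proof -
  have "0 \<le> t * (2 * (norm (f v))\<^sup>2) + t\<^sup>2 * (f v \<bullet> f (f v))" for t
  proof -
    have "0 \<le> (v + t *\<^sub>R f v) \<bullet> f (v + t *\<^sub>R f v)"
      by (rule nonneg)
    also have "\<dots> = v \<bullet> f v + t * (v \<bullet> f (f v)) + t * (f v \<bullet> f v) + t\<^sup>2 * (f v \<bullet> f (f v))"
      by (simp add: linear_add[OF lin] linear_cmul[OF lin] inner_add inner_commute
          power2_eq_square algebra_simps)
    also have "v \<bullet> f (f v) = f v \<bullet> f v"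
      using selfadjoint[of v "f v"] by (simp add: inner_commute)
    finally show ?thesis
      using zero by (simp add: power2_norm_eq_inner algebra_simps)
  qed
  then have "2 * (norm (f v))\<^sup>2 = 0"
    by (rule linear_plus_quadratic_nonneg_imp_eq_0)
  then show ?thesis by simp
qed

lemma symmetric_matrix_min_eigenvalue:
  fixes A :: "real^'n^'n"
  assumes sym: "transpose A = A"
  obtains c v where "v \<noteq> 0" "A *v v = c *s v" "\<And>z. c * (norm z)\<^sup>2 \<le> z \<bullet> (A *v z)"
proof -
  let ?q = "\<lambda>z. z \<bullet> (A *v z)"
  have "continuous_on (sphere 0 1) ?q"
    by (intro continuous_intros linear_continuous_on matrix_vector_mul_linear)
  moreover have "sphere (0::real^'n) 1 \<noteq> {}"
    using norm_axis_1[where 'a='n] by (metis mem_sphere_0 empty_iff)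
  ultimately obtain v where "v \<in> sphere 0 1" and min: "\<And>u. u \<in> sphere 0 1 \<Longrightarrow> ?q v \<le> ?q u"
    using continuous_attains_inf[OF compact_sphere] by blast
  then have v: "norm v = 1" by simp
  define c where "c = ?q v"
  have Rayleigh: "c * (norm z)\<^sup>2 \<le> ?q z" for z
  proof (cases "z = 0")
    case False
    have "c \<le> ?q ((1 / norm z) *\<^sub>R z)"
      unfolding c_def using False by (intro min) auto
    also have "\<dots> = ?q z / (norm z)\<^sup>2"
      by (simp add: matrix_vector_mult_scaleR power2_eq_square)
    finally show ?thesis
      using False by (simp add: pos_le_divide_eq)
  qed simp
  have "A *v v - c *\<^sub>R v = 0"
  proof (rule nonneg_selfadjoint_zero_form_imp_zero[where f = "\<lambda>z. A *v z - c *\<^sub>R z"])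
    show "linear (\<lambda>z. A *v z - c *\<^sub>R z)"
      by (rule linear_compose_sub[OF matrix_vector_mul_linear linear_scaleR])
    show "u \<bullet> (A *v w - c *\<^sub>R w) = w \<bullet> (A *v u - c *\<^sub>R u)" for u w
      using symmetric_matrix_inner_commute[OF sym, of u w] by (simp add: inner_diff_right inner_commute)
    show "0 \<le> z \<bullet> (A *v z - c *\<^sub>R z)" for z
      using Rayleigh[of z] by (simp add: inner_diff_right power2_norm_eq_inner)
    show "v \<bullet> (A *v v - c *\<^sub>R v) = 0"
      using v by (simp add: c_def inner_diff_right power2_norm_eq_inner[symmetric])
  qed
  then have "A *v v = c *s v"
    by (simp add: scalar_mult_eq_scaleR)
  moreover have "v \<noteq> 0"
    using v by auto
  ultimately show thesis
    using Rayleigh by (intro that[of v c])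
qed

lemma symmetric_matrix_eigenvectors_orthogonal:
  fixes A :: "real^'n^'n"
  assumes sym: "transpose A = A"
    and v: "A *v v = c *s v" and w: "A *v w = d *s w" and "c \<noteq> d"
  shows "v \<bullet> w = 0"
proof -
  have "c * (w \<bullet> v) = d * (v \<bullet> w)"
    using symmetric_matrix_inner_commute[OF sym, of w v] v w by (simp add: scalar_mult_eq_scaleR)
  then show ?thesis
    using \<open>c \<noteq> d\<close> by (simp add: inner_commute)
qed

lemma symmetric_matrix_eigenvalues_finite:
  fixes A :: "real^'n^'n"
  assumes sym: "transpose A = A"
  shows "finite {c. \<exists>v. v \<noteq> 0 \<and> A *v v = c *s v}" (is "finite ?S")
proof -
  define f where "f c = (SOME v. v \<noteq> 0 \<and> A *v v = c *s v)" for c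
  have f: "f c \<noteq> 0" "A *v f c = c *s f c" if "c \<in> ?S" for c
    using someI_ex[OF that[unfolded mem_Collect_eq]] by (simp_all add: f_def)
  have orth: "f c \<bullet> f d = 0" if "c \<in> ?S" "d \<in> ?S" "c \<noteq> d" for c d
    using symmetric_matrix_eigenvectors_orthogonal[OF sym f(2) f(2)] that by blast
  have inj: "inj_on f ?S"
  proof (rule inj_onI)
    fix c d assume "c \<in> ?S" "d \<in> ?S" "f c = f d"
    then show "c = d"
      using orth[of c d] f(1)[of c] by auto
  qed
  have "pairwise orthogonal (f ` ?S)"
    unfolding pairwise_image
  proof (rule pairwiseI)
    fix c d assume "c \<in> ?S" "d \<in> ?S" "c \<noteq> d"
    then show "f c \<noteq> f d \<longrightarrow> orthogonal (f c) (f d)"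
      unfolding orthogonal_def by (intro impI orth)
  qed
  moreover have "0 \<notin> f ` ?S"
  proof
    assume "0 \<in> f ` ?S"
    then obtain c where c: "c \<in> ?S" and "f c = 0" by (rule imageE) simp
    with f(1)[OF c] show False by simp
  qed
  ultimately have "finite (f ` ?S)"
    by (intro independent_imp_finite pairwise_orthogonal_independent)
  then show ?thesis
    using inj by (rule finite_imageD)
qed

lemma lambda_min_le_quadratic_form:
  fixes A :: "real^'n^'n"
  assumes sym: "transpose A = A"
  shows "lambda_min A * (norm z)\<^sup>2 \<le> z \<bullet> (A *v z)"
proof -
  obtain c v where eigen: "v \<noteq> 0" "A *v v = c *s v"
    and Rayleigh: "\<And>z. c * (norm z)\<^sup>2 \<le> z \<bullet> (A *v z)"
    using symmetric_matrix_min_eigenvalue[OF sym] by blast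
  have "lambda_min A \<le> c"
    unfolding lambda_min_def using symmetric_matrix_eigenvalues_finite[OF sym]
    by (rule Min_le) (use eigen in blast)
  then have "lambda_min A * (norm z)\<^sup>2 \<le> c * (norm z)\<^sup>2"
    by (simp add: mult_right_mono)
  with Rayleigh[of z] show ?thesis by linarith
qed

lemma transpose_H_mat: "transpose (H_mat x W) = H_mat x W"
  by (simp add: transpose_def H_mat_def vec_eq_iff inner_commute conj_commute)

definition gated_combination ::
    "('n::finite \<Rightarrow> real^'d) \<Rightarrow> ('m \<Rightarrow> real^'d) \<Rightarrow> real^'n \<Rightarrow> 'm \<Rightarrow> real^'d" where
  "gated_combination x W e r = (\<Sum>i\<in>UNIV. (e $ i * (if W r \<bullet> x i \<ge> 0 then 1 else 0)) *\<^sub>R x i)"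

lemma loss_grad_eq_gated_combination:
  "loss_grad x y W a r =
     (a r / sqrt (real CARD('m))) *\<^sub>R gated_combination x W (net_out x W a - y) r"
  for W :: "'m::finite \<Rightarrow> real^'d"
  unfolding loss_grad_def gated_combination_def by (simp add: scaleR_sum_right algebra_simps)

lemma norm_loss_grad:
  fixes W :: "'m::finite \<Rightarrow> real^'d"
  assumes "\<bar>a r\<bar> = 1"
  shows "norm (loss_grad x y W a r) =
           norm (gated_combination x W (net_out x W a - y) r) / sqrt (real CARD('m))"
  using assms by (simp add: loss_grad_eq_gated_combination)

lemma quadratic_form_H_mat:
  fixes W :: "'m::finite \<Rightarrow> real^'d"
  shows "e \<bullet> (H_mat x W *v e) = (\<Sum>r\<in>UNIV. (norm (gated_combination x W e r))\<^sup>2) / real CARD('m)"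
proof -
  define I where "I r i = (if W r \<bullet> x i \<ge> 0 then 1 else 0 :: real)" for r i
  have H: "H_mat x W $ i $ j = (\<Sum>r\<in>UNIV. I r i * I r j * (x i \<bullet> x j)) / real CARD('m)" for i j
    unfolding H_mat_def I_def by (auto simp add: sum_divide_distrib intro!: sum.cong)
  have G: "(norm (gated_combination x W e r))\<^sup>2 =
      (\<Sum>i\<in>UNIV. \<Sum>j\<in>UNIV. e $ i * e $ j * (I r i * I r j * (x i \<bullet> x j)))" for r
    unfolding gated_combination_def I_def[symmetric] power2_norm_eq_inner
    by (simp add: inner_sum_left inner_sum_right sum_distrib_left inner_commute algebra_simps)
  have "e \<bullet> (H_mat x W *v e) = (\<Sum>i\<in>UNIV. \<Sum>j\<in>UNIV. e $ i * e $ j * H_mat x W $ i $ j)"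
    by (simp add: inner_vec_def matrix_vector_mult_def sum_distrib_left algebra_simps)
  also have "\<dots> = (\<Sum>i\<in>UNIV. \<Sum>j\<in>UNIV. \<Sum>r\<in>UNIV.
      e $ i * e $ j * (I r i * I r j * (x i \<bullet> x j))) / real CARD('m)"
    unfolding H by (simp add: sum_distrib_left sum_divide_distrib)
  also have "\<dots> = (\<Sum>r\<in>UNIV. \<Sum>i\<in>UNIV. \<Sum>j\<in>UNIV.
      e $ i * e $ j * (I r i * I r j * (x i \<bullet> x j))) / real CARD('m)"
    by (rule arg_cong[where f = "\<lambda>s. s / real CARD('m)"],
        rule trans[OF sum.cong[OF refl sum.swap] sum.swap])
  finally show ?thesis
    by (simp add: G)
qed

lemma sum_abs_le_sqrt_card_mult_norm:
  fixes e :: "real^'n"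
  shows "(\<Sum>i\<in>UNIV. \<bar>e $ i\<bar>) \<le> sqrt (real CARD('n)) * norm e"
proof -
  have "(\<Sum>i\<in>UNIV. 1 * \<bar>e $ i\<bar>)\<^sup>2 \<le> (\<Sum>i\<in>(UNIV::'n set). 1\<^sup>2) * (\<Sum>i\<in>UNIV. \<bar>e $ i\<bar>\<^sup>2)"
    by (rule Cauchy_Schwarz_ineq_sum)
  also have "(\<Sum>i\<in>UNIV. \<bar>e $ i\<bar>\<^sup>2) = (norm e)\<^sup>2"
    unfolding power2_norm_eq_inner inner_vec_def by (simp add: power2_eq_square)
  finally have "(\<Sum>i\<in>UNIV. \<bar>e $ i\<bar>)\<^sup>2 \<le> (sqrt (real CARD('n)) * norm e)\<^sup>2"
    by (simp add: power_mult_distrib)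
  then show ?thesis
    by (rule power2_le_imp_le) simp
qed

lemma norm_gated_combination_le:
  fixes x :: "'n::finite \<Rightarrow> real^'d"
  assumes "\<And>i. norm (x i) \<le> 1"
  shows "norm (gated_combination x W e r) \<le> sqrt (real CARD('n)) * norm e"
proof -
  have "norm (gated_combination x W e r) \<le>
      (\<Sum>i\<in>UNIV. norm ((e $ i * (if W r \<bullet> x i \<ge> 0 then 1 else 0)) *\<^sub>R x i))"
    unfolding gated_combination_def by (rule norm_sum)
  also have "\<dots> \<le> (\<Sum>i\<in>UNIV. \<bar>e $ i\<bar>)"
    using assms by (intro sum_mono) (simp add: mult_left_le)
  also have "\<dots> \<le> sqrt (real CARD('n)) * norm e"
    by (rule sum_abs_le_sqrt_card_mult_norm)
  finally show ?thesis .
qed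

lemma Max_norm_loss_grad_le:
  fixes x :: "'n::finite \<Rightarrow> real^'d" and W :: "'m::finite \<Rightarrow> real^'d"
  assumes "\<And>i. norm (x i) \<le> 1" and "\<And>r. \<bar>a r\<bar> \<le> 1"
  shows "(MAX r\<in>UNIV. norm (loss_grad x y W a r))
           \<le> sqrt (real CARD('n)) / sqrt (real CARD('m)) * norm (y - net_out x W a)"
proof -
  have "norm (loss_grad x y W a r)
      \<le> sqrt (real CARD('n)) / sqrt (real CARD('m)) * norm (y - net_out x W a)" for r
  proof -
    let ?g = "gated_combination x W (net_out x W a - y) r"
    have "norm (loss_grad x y W a r) = \<bar>a r\<bar> * norm ?g / sqrt (real CARD('m))"
      by (simp add: loss_grad_eq_gated_combination)
    also have "\<dots> \<le> norm ?g / sqrt (real CARD('m))"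
      using assms(2)[of r] by (intro divide_right_mono mult_left_le_one_le) auto
    also have "\<dots> \<le> sqrt (real CARD('n)) * norm (net_out x W a - y) / sqrt (real CARD('m))"
      using assms(1) by (intro divide_right_mono norm_gated_combination_le) auto
    finally show ?thesis
      by (simp add: norm_minus_commute)
  qed
  then show ?thesis
    by (intro Max.boundedI) auto
qed

lemma Max_norm_loss_grad_ge:
  fixes x :: "'n::finite \<Rightarrow> real^'d" and W :: "'m::finite \<Rightarrow> real^'d"
  assumes signs: "\<And>r. \<bar>a r\<bar> = 1"
    and "0 \<le> lam" and lam: "lam \<le> lambda_min (H_mat x W)"
  shows "sqrt lam / sqrt (real CARD('m)) * norm (y - net_out x W a)
           \<le> (MAX r\<in>UNIV. norm (loss_grad x y W a r))"
proof -
  define m where "m = real CARD('m)"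
  define e where "e = net_out x W a - y"
  define M where "M = (MAX r\<in>UNIV. norm (loss_grad x y W a r))"
  have m: "m > 0"
    by (simp add: m_def)
  have "0 \<le> M"
    unfolding M_def by (rule order_trans[OF norm_ge_zero Max_ge]) auto
  have gated_bound: "norm (gated_combination x W e r) \<le> sqrt m * M" for r
  proof -
    have "norm (loss_grad x y W a r) \<le> M"
      unfolding M_def by (rule Max_ge) auto
    then show ?thesis
      using m by (simp add: norm_loss_grad[OF signs] e_def m_def pos_divide_le_eq mult.commute)
  qed
  have "(sqrt lam * norm e)\<^sup>2 = lam * (norm e)\<^sup>2"
    using \<open>0 \<le> lam\<close> by (simp add: power_mult_distrib)
  also have "\<dots> \<le> lambda_min (H_mat x W) * (norm e)\<^sup>2"
    using lam by (rule mult_right_mono) simp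
  also have "\<dots> \<le> e \<bullet> (H_mat x W *v e)"
    by (rule lambda_min_le_quadratic_form[OF transpose_H_mat])
  also have "\<dots> = (\<Sum>r\<in>UNIV. (norm (gated_combination x W e r))\<^sup>2) / m"
    by (simp add: quadratic_form_H_mat m_def)
  also have "\<dots> \<le> (\<Sum>r\<in>(UNIV :: 'm set). (sqrt m * M)\<^sup>2) / m"
    using m gated_bound by (intro divide_right_mono sum_mono power_mono) auto
  also have "\<dots> = (sqrt m * M)\<^sup>2"
    using m by (simp add: m_def)
  finally have "(sqrt lam * norm e)\<^sup>2 \<le> (sqrt m * M)\<^sup>2" .
  then have "sqrt lam * norm e \<le> sqrt m * M"
    by (rule power2_le_imp_le) (simp add: \<open>0 \<le> M\<close> less_imp_le[OF m])
  then have "sqrt lam * norm e / sqrt m \<le> M"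
    using m by (simp add: pos_divide_le_eq mult.commute)
  then show ?thesis
    by (simp add: e_def M_def m_def norm_minus_commute)
qed

theorem mainTheorem7:
  fixes x :: "'n::finite \<Rightarrow> real^'d"
    and y :: "real^'n"
    and W :: "'m::finite \<Rightarrow> real^'d"
    and a :: "'m \<Rightarrow> real"
  assumes unit: "\<forall>i. norm (x i) = 1"
    and signs: "\<forall>r. a r \<in> {-1, 1}"
    and lam0_pos: "lambda_min (H_inf x) > 0"
    and H_bound: "lambda_min (H_mat x W) \<ge> lambda_min (H_inf x) / 2"
  shows "sqrt (lambda_min (H_inf x)) / sqrt (2 * real CARD('m)) * norm (y - net_out x W a)
           \<le> (MAX r\<in>UNIV. norm (loss_grad x y W a r))
       \<and> (MAX r\<in>UNIV. norm (loss_grad x y W a r))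
           \<le> sqrt (real CARD('n)) / sqrt (real CARD('m)) * norm (y - net_out x W a)"
proof
  have abs_a: "\<bar>a r\<bar> = 1" for r
    using signs[rule_format, of r] by auto
  have "sqrt (lambda_min (H_inf x) / 2) / sqrt (real CARD('m)) * norm (y - net_out x W a)
          \<le> (MAX r\<in>UNIV. norm (loss_grad x y W a r))"
    using lam0_pos H_bound by (intro Max_norm_loss_grad_ge abs_a) auto
  then show "sqrt (lambda_min (H_inf x)) / sqrt (2 * real CARD('m)) * norm (y - net_out x W a)
               \<le> (MAX r\<in>UNIV. norm (loss_grad x y W a r))"
    by (simp add: real_sqrt_divide real_sqrt_mult)
  show "(MAX r\<in>UNIV. norm (loss_grad x y W a r))
          \<le> sqrt (real CARD('n)) / sqrt (real CARD('m)) * norm (y - net_out x W a)"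
    using unit abs_a by (intro Max_norm_loss_grad_le) auto
qed

end
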